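(* For integers $M\ge L>N\ge1$ and $K=M-L+N+1$, the number $Z_{L,M,N}$ of configurations of the four-vertex model on the $L\times M$ grid with scalar-product boundary conditions equals the number of $N$-tuples of pairwise vertex-disjoint up/right lattice paths on the grid $\{1,\dots,L\}\times\{1,\dots,K\}$ in which the $j$th path goes from $(j,1)$ to $(L-N+j,K)$, $j=1,\dots,N$; consequently $$Z_{L,M,N}=\det_{1\le i,j\le N}\left[\binom{M+i-j}{L-N+i-j}\right].$$
   Context: Four-vertex model: on the grid of vertices $(n,m)$, $1\le n\le L$, $1\le m\le M$, every edge (including boundary edges sticking out of the rectangle) is thick or thin, such that at every vertex the four incident edges form one of four allowed local configurations: type $a$: all thin; type $b$: both vertical edges thick, both horizontal thin; type $c$ (two kinds): south and east thick, west and north thin; or west and north thick, south and east thin. Scalar-product boundary conditions: the south boundary vertical edges in columns $1,\dots,N$ and the north boundary vertical edges in columns $L-N+1,\dots,L$ are thick; all other boundary edges are thin. An up/right lattice path uses unit steps $(1,0)$ and $(0,1)$. *)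

theory Defs
  imports Main "Jordan_Normal_Form.Determinant"
begin

(* Edges of the L x M grid, vertices (n,m), 1<=n<=L, 1<=m<=M.
   Vertical edge (n,m), 1<=n<=L, 0<=m<=M: joins (n,m) and (n,m+1)
     (m = 0: south boundary edge of column n; m = M: north boundary edge).
   Horizontal edge (n,m), 0<=n<=L, 1<=m<=M: joins (n,m) and (n+1,m)
     (n = 0: west boundary edge of row m; n = L: east boundary edge).
   A configuration is given by the sets V, H of thick vertical / horizontal edges. *)

definition vert_edges :: "nat \<Rightarrow> nat \<Rightarrow> (nat \<times> nat) set" where
  "vert_edges L M = {1..L} \<times> {0..M}"

definition horiz_edges :: "nat \<Rightarrow> nat \<Rightarrow> (nat \<times> nat) set" where
  "horiz_edges L M = {0..L} \<times> {1..M}"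

(* allowed local configuration at vertex (n,m), given thickness of S, N, W, E edges *)
definition allowed_vertex :: "bool \<Rightarrow> bool \<Rightarrow> bool \<Rightarrow> bool \<Rightarrow> bool" where
  "allowed_vertex s nn w e \<longleftrightarrow>
     (\<not> s \<and> \<not> nn \<and> \<not> w \<and> \<not> e) \<or>        \<comment> \<open>type a\<close>
     (s \<and> nn \<and> \<not> w \<and> \<not> e) \<or>            \<comment> \<open>type b\<close>
     (s \<and> e \<and> \<not> w \<and> \<not> nn) \<or>            \<comment> \<open>type c, first kind\<close>
     (w \<and> nn \<and> \<not> s \<and> \<not> e)"

definition four_vertex_config ::
  "nat \<Rightarrow> nat \<Rightarrow> nat \<Rightarrow> (nat \<times> nat) set \<Rightarrow> (nat \<times> nat) set \<Rightarrow> bool" where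
  "four_vertex_config L M N V H \<longleftrightarrow>
     V \<subseteq> vert_edges L M \<and> H \<subseteq> horiz_edges L M \<and>
     (\<forall>n\<in>{1..L}. \<forall>m\<in>{1..M}.
        allowed_vertex ((n, m - 1) \<in> V) ((n, m) \<in> V) ((n - 1, m) \<in> H) ((n, m) \<in> H)) \<and>
     \<comment> \<open>scalar-product boundary conditions\<close>
     (\<forall>n\<in>{1..L}. (n, 0) \<in> V \<longleftrightarrow> n \<le> N) \<and>
     (\<forall>n\<in>{1..L}. (n, M) \<in> V \<longleftrightarrow> L - N + 1 \<le> n) \<and>
     (\<forall>m\<in>{1..M}. (0, m) \<notin> H \<and> (L, m) \<notin> H)"

definition Z :: "nat \<Rightarrow> nat \<Rightarrow> nat \<Rightarrow> nat" where
  "Z L M N = card {(V, H). four_vertex_config L M N V H}"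

definition up_right_path :: "(nat \<times> nat) list \<Rightarrow> bool" where
  "up_right_path p \<longleftrightarrow> p \<noteq> [] \<and>
     (\<forall>i. Suc i < length p \<longrightarrow>
        p ! Suc i = (fst (p ! i) + 1, snd (p ! i)) \<or> p ! Suc i = (fst (p ! i), snd (p ! i) + 1))"

(* N-tuples (indexed by 1..N, value [] elsewhere) of pairwise vertex-disjoint
   up/right paths in {1..L} x {1..K}, path j from (j,1) to (L-N+j,K) *)
definition path_tuples :: "nat \<Rightarrow> nat \<Rightarrow> nat \<Rightarrow> (nat \<Rightarrow> (nat \<times> nat) list) set" where
  "path_tuples L K N = {P.
     (\<forall>j\<in>{1..N}. up_right_path (P j) \<and> set (P j) \<subseteq> {1..L} \<times> {1..K} \<and>
                  hd (P j) = (j, 1) \<and> last (P j) = (L - N + j, K)) \<and>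
     (\<forall>j. j \<notin> {1..N} \<longrightarrow> P j = []) \<and>
     (\<forall>i\<in>{1..N}. \<forall>j\<in>{1..N}. i \<noteq> j \<longrightarrow> set (P i) \<inter> set (P j) = {})}"

(* binomial coefficient with integer arguments, zero for negative lower index
   (upper index is nonnegative wherever it is used) *)
definition ibinom :: "int \<Rightarrow> int \<Rightarrow> int" where
  "ibinom a b = (if b < 0 \<or> a < 0 then 0 else int (nat a choose nat b))"

end

theory Submission
  imports Defs
begin

text \<open>Both sides are counted row by row. Reading off, after each row of vertices, the columns
  of the thick vertical edges turns a four-vertex configuration into a walk of increasing
  position vectors \<open>(1, \<dots>, N) = y\<^sub>0, y\<^sub>1, \<dots>, y\<^sub>M = (L - N + 1, \<dots>, L)\<close> in which each
  coordinate stays or moves one column to the right. Reading off where the paths leave each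
  row (they enter row \<open>1\<close> in columns \<open>1, \<dots>, N\<close>) turns an \<open>N\<close>-tuple of disjoint paths into
  a walk of length \<open>K\<close> between the same vectors in which a coordinate may move any distance
  to the right, as long as it stays left of the old position of its right neighbour.
  In both cases the predecessors of a vector form a box, and the number of walks ending at
  \<open>y\<close> is a determinant of binomial coefficients in the \<open>y\<^sub>i\<close>: the sum over the box of the
  determinants for the predecessors is, by multilinearity, the determinant of the row sums;
  by Pascal's rule each row sum is the new row minus, possibly, the previous new row, which
  does not change the determinant. Both determinants specialise to
  \<open>det [binom (M + i - j) (L - N + i - j)]\<close>.\<close>

section \<open>Determinants\<close>

lemma det_sum_PiE_rows:
  fixes f :: "nat \<Rightarrow> 'b \<Rightarrow> nat \<Rightarrow> 'a::comm_ring_1"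
  assumes "\<And>i. i < n \<Longrightarrow> finite (S i)"
  shows "(\<Sum>u\<in>PiE {0..<n} S. det (mat n n (\<lambda>(i, j). f i (u i) j)))
       = det (mat n n (\<lambda>(i, j). \<Sum>x\<in>S i. f i x j))"
proof -
  have "(\<Sum>u\<in>PiE {0..<n} S. det (mat n n (\<lambda>(i, j). f i (u i) j)))
     = (\<Sum>u\<in>PiE {0..<n} S. \<Sum>p\<in>{p. p permutes {0..<n}}. signof p * (\<Prod>i=0..<n. f i (u i) (p i)))"
    by (intro sum.cong refl, subst det_def'[of _ n], auto intro!: sum.cong prod.cong)
  also have "\<dots> = (\<Sum>p\<in>{p. p permutes {0..<n}}. signof p * (\<Sum>u\<in>PiE {0..<n} S. \<Prod>i=0..<n. f i (u i) (p i)))"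
    by (subst sum.swap, simp add: sum_distrib_left)
  also have "\<dots> = (\<Sum>p\<in>{p. p permutes {0..<n}}. signof p * (\<Prod>i=0..<n. \<Sum>x\<in>S i. f i x (p i)))"
    by (intro sum.cong refl arg_cong[where f="\<lambda>x. _ * x"], subst prod_sum_PiE) (auto simp: assms)
  also have "\<dots> = det (mat n n (\<lambda>(i, j). \<Sum>x\<in>S i. f i x j))"
    by (subst det_def'[of _ n], auto intro!: sum.cong prod.cong)
  finally show ?thesis .
qed

lemma det_unit_lower_triangular:
  fixes A :: "'a::comm_ring_1 mat"
  assumes A: "A \<in> carrier_mat n n"
    and "\<And>i. i < n \<Longrightarrow> A $$ (i, i) = 1" and "\<And>i j. i < j \<Longrightarrow> j < n \<Longrightarrow> A $$ (i, j) = 0"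
  shows "det A = 1"
proof -
  have "diag_mat A = map (\<lambda>_. 1) [0..<n]"
    using assms by (auto simp: diag_mat_def)
  thus ?thesis
    by (subst det_lower_triangular[OF _ A]) (use assms in \<open>auto simp: map_replicate_const\<close>)
qed

lemma det_subtract_previous_rows:
  fixes R :: "nat \<Rightarrow> nat \<Rightarrow> 'a::comm_ring_1"
  assumes "\<not> e 0"
  shows "det (mat n n (\<lambda>(i, j). R i j - (if e i then R (i - 1) j else 0)))
       = det (mat n n (\<lambda>(i, j). R i j))"
proof -
  define E :: "'a mat" where
    "E = mat n n (\<lambda>(i, j). if i = j then 1 else if e i \<and> j = i - 1 then -1 else 0)"
  define A where "A = mat n n (\<lambda>(i, j). R i j)"
  have E: "E \<in> carrier_mat n n" and A: "A \<in> carrier_mat n n"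
    unfolding E_def A_def by auto
  have pos: "e i \<Longrightarrow> 0 < i" for i
    using assms by (cases i) auto
  have "det E = 1"
    by (rule det_unit_lower_triangular[OF E]) (auto simp: E_def dest: pos)
  moreover have "E * A = mat n n (\<lambda>(i, j). R i j - (if e i then R (i - 1) j else 0))"
  proof (rule eq_matI)
    fix i j assume "i < dim_row (mat n n (\<lambda>(i, j). R i j - (if e i then R (i - 1) j else 0)))"
      and "j < dim_col (mat n n (\<lambda>(i, j). R i j - (if e i then R (i - 1) j else 0)))"
    hence i: "i < n" and j: "j < n" by auto
    have "(E * A) $$ (i, j) = (\<Sum>k=0..<n. E $$ (i, k) * R k j)"
      using i j E A by (simp add: scalar_prod_def A_def E_def)
    also have "\<dots> = (\<Sum>k\<in>{0..<n}. (if k = i then R i j else 0)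
                      + (if e i \<and> k = i - 1 then - R (i - 1) j else 0))"
      using i by (intro sum.cong refl) (auto simp: E_def dest: pos)
    also have "\<dots> = R i j - (if e i then R (i - 1) j else 0)"
      using i by (auto simp: sum.distrib)
    finally show "(E * A) $$ (i, j)
        = mat n n (\<lambda>(i, j). R i j - (if e i then R (i - 1) j else 0)) $$ (i, j)"
      using i j by simp
  qed (use E A in auto)
  ultimately show ?thesis
    using det_mult[OF E A] by (simp add: A_def)
qed

lemma det_zero_row:
  fixes A :: "'a::comm_ring_1 mat"
  assumes A: "A \<in> carrier_mat n n" and "k < n" and "\<And>j. j < n \<Longrightarrow> A $$ (k, j) = 0"
  shows "det A = 0"
proof -
  have "(\<Prod>i=0..<n. A $$ (i, p i)) = 0" if "p permutes {0..<n}" for p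
    using assms that by (intro prod_zero bexI[of _ k]) (auto dest: permutes_in_image)
  thus ?thesis
    by (simp add: det_def'[OF A])
qed

section \<open>Binomial coefficients with integer arguments\<close>

text \<open>Unlike \<^const>\<open>ibinom\<close>, this binomial coefficient takes its classical values
  \<open>a gchoose b\<close> also for negative \<open>a\<close>, so that Pascal's rule holds for all integers.\<close>

definition zbinom :: "int \<Rightarrow> int \<Rightarrow> rat" where
  "zbinom a b = (if b < 0 then 0 else of_int a gchoose nat b)"

lemma zbinom_neg [simp]: "b < 0 \<Longrightarrow> zbinom a b = 0"
  by (simp add: zbinom_def)

lemma zbinom_0 [simp]: "zbinom a 0 = 1"
  by (simp add: zbinom_def)

lemma zbinom_Pascal: "zbinom (a + 1) b = zbinom a b + zbinom a (b - 1)"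
proof (cases "b \<le> 0")
  case True
  thus ?thesis by (cases "b = 0") (auto simp: zbinom_def)
next
  case False
  define k where "k = nat b - 1"
  have "nat b = Suc k" "nat (b - 1) = k"
    using False by (auto simp: k_def)
  thus ?thesis
    using False gbinomial_Suc_Suc[of "of_int a :: rat" k] by (simp add: zbinom_def add.commute)
qed

lemma zbinom_eq_ibinom: "0 \<le> a \<Longrightarrow> zbinom a b = of_int (ibinom a b)"
  using binomial_gbinomial[of "nat a" "nat b", where 'a=rat] by (simp add: zbinom_def ibinom_def)

lemma zbinom_eq_0: "0 \<le> a \<Longrightarrow> a < b \<Longrightarrow> zbinom a b = 0"
  by (simp add: zbinom_eq_ibinom ibinom_def binomial_eq_0 nat_less_eq_zless)

section \<open>Walks of position vectors and their determinants\<close>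

text \<open>Column \<open>0\<close> acts as a wall to the left of the first position.\<close>

definition prev_pos :: "(nat \<Rightarrow> nat) \<Rightarrow> nat \<Rightarrow> nat" where
  "prev_pos y i = (if i = 0 then 0 else y (i - 1))"

definition positions :: "nat \<Rightarrow> (nat \<Rightarrow> nat) \<Rightarrow> bool" where
  "positions N y \<longleftrightarrow> strict_mono_on {0..<N} y \<and> (\<forall>i<N. 0 < y i)"

lemma positions_less: "positions N y \<Longrightarrow> i < k \<Longrightarrow> k < N \<Longrightarrow> y i < y k"
  using strict_mono_onD[of "{0..<N}" y i k] by (simp add: positions_def)

lemma positions_prev_pos_less:
  assumes "positions N y" and "i < N"
  shows "prev_pos y i < y i"
proof (cases "i = 0")
  case True
  thus ?thesis using assms by (simp add: positions_def prev_pos_def)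
next
  case False
  thus ?thesis using positions_less[OF assms(1), of "i - 1" i] assms(2) by (simp add: prev_pos_def)
qed

lemma positions_gap:
  assumes "positions N y" and "i \<le> k" and "k < N"
  shows "y i + (k - i) \<le> y k"
  using assms(2,3)
proof (induction k)
  case (Suc k)
  thus ?case
    using positions_less[OF assms(1), of k "Suc k"] by (cases "i = Suc k") auto
qed simp

lemma positions_ge: "positions N y \<Longrightarrow> i < N \<Longrightarrow> Suc i \<le> y i"
  using positions_gap[of N y 0 i] unfolding positions_def by fastforce

lemma positions_eq_Suc_iff:
  assumes y: "positions N y"
  shows "(\<forall>i<N. y i = Suc i) \<longleftrightarrow> y ` {0..<N} = {1..N}"
proof
  assume image: "y ` {0..<N} = {1..N}"
  show "\<forall>i<N. y i = Suc i"
  proof (intro allI impI)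
    fix i assume i: "i < N"
    have "y (N - 1) \<in> y ` {0..<N}"
      using i by auto
    hence "y (N - 1) \<le> N"
      using image by auto
    thus "y i = Suc i"
      using positions_gap[OF y, of i "N - 1"] positions_ge[OF y i] i by linarith
  qed
next
  assume "\<forall>i<N. y i = Suc i"
  hence "y ` {0..<N} = Suc ` {0..<N}"
    by (intro image_cong) auto
  thus "y ` {0..<N} = {1..N}"
    by (simp add: image_Suc_atLeastLessThan atLeastLessThanSuc_atLeastAtMost)
qed

lemma positions_le_prev_pos:
  assumes "positions N y" and "i < k" and "k < N"
  shows "y i \<le> prev_pos y k"
proof -
  obtain k' where k: "k = Suc k'"
    using assms(2) by (cases k) auto
  have "y i \<le> y k'"
    using positions_less[OF assms(1), of i k'] assms k by (cases "i = k'") auto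
  thus ?thesis
    by (simp add: prev_pos_def k)
qed

lemma box_interlacing:
  assumes y: "positions N y" and u: "u \<in> PiE {0..<N} B"
    and B: "\<And>i. i < N \<Longrightarrow> B i \<subseteq> {Suc (prev_pos y i)..y i}" and "i < k" "k < N"
  shows "y i < u k"
proof -
  have "u k \<in> {Suc (prev_pos y k)..y k}"
    using PiE_mem[OF u, of k] B[of k] \<open>k < N\<close> by auto
  thus ?thesis
    using positions_le_prev_pos[OF y \<open>i < k\<close> \<open>k < N\<close>] by simp
qed

lemma box_positions:
  assumes y: "positions N y" and u: "u \<in> PiE {0..<N} B"
    and B: "\<And>i. i < N \<Longrightarrow> B i \<subseteq> {Suc (prev_pos y i)..y i}"
  shows "positions N u"
proof -
  have in_box: "u i \<in> {Suc (prev_pos y i)..y i}" if "i < N" for i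
    using PiE_mem[OF u, of i] B[OF that] that by auto
  have "u i < u k" if "i < k" "k < N" for i k
  proof -
    have "u i \<le> y i"
      using in_box[OF less_trans[OF that]] by simp
    also have "y i < u k"
      by (rule box_interlacing[OF y u B that])
    finally show ?thesis .
  qed
  moreover have "0 < u i" if "i < N" for i
    using in_box[OF that] by simp
  ultimately show ?thesis
    by (simp add: positions_def strict_mono_on_def)
qed

text \<open>The number of walks \<open>(1, \<dots>, N) = y\<^sub>0, \<dots>, y\<^sub>t = y\<close> in which each \<open>y\<^sub>s\<close> lies in the box
  \<open>B y\<^sub>s\<^sub>+\<^sub>1\<close> of allowed predecessors of \<open>y\<^sub>s\<^sub>+\<^sub>1\<close>.\<close>

fun box_walks :: "((nat \<Rightarrow> nat) \<Rightarrow> nat \<Rightarrow> nat set) \<Rightarrow> nat \<Rightarrow> nat \<Rightarrow> (nat \<Rightarrow> nat) \<Rightarrow> nat" where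
  "box_walks B N 0 y = (if \<forall>i<N. y i = Suc i then 1 else 0)"
| "box_walks B N (Suc t) y = (\<Sum>u\<in>PiE {0..<N} (B y). box_walks B N t u)"

lemma det_initial_positions:
  fixes G :: "nat \<Rightarrow> nat \<Rightarrow> nat \<Rightarrow> 'a::comm_ring_1"
  assumes y: "positions N y"
    and diag: "\<And>i. i < N \<Longrightarrow> G (Suc i) i i = 1"
    and upper: "\<And>i j. i < j \<Longrightarrow> j < N \<Longrightarrow> G (Suc i) i j = 0"
    and last_row: "\<And>x j. N < x \<Longrightarrow> j < N \<Longrightarrow> G x (N - 1) j = 0"
  shows "det (mat N N (\<lambda>(i, j). G (y i) i j)) = (if \<forall>i<N. y i = Suc i then 1 else 0)"
proof (cases "\<forall>i<N. y i = Suc i")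
  case True
  have "det (mat N N (\<lambda>(i, j). G (y i) i j)) = 1"
    by (rule det_unit_lower_triangular) (use True diag upper in auto)
  thus ?thesis using True by simp
next
  case False
  then obtain i where i: "i < N" "y i \<noteq> Suc i" by auto
  have "N < y (N - 1)"
    using positions_gap[OF y, of i "N - 1"] positions_ge[OF y i(1)] i by linarith
  hence "det (mat N N (\<lambda>(i, j). G (y i) i j)) = 0"
    using i(1) last_row[of "y (N - 1)"] by (intro det_zero_row[of _ N "N - 1"]) auto
  thus ?thesis using False by simp
qed

theorem box_walks_det:
  fixes F :: "nat \<Rightarrow> nat \<Rightarrow> nat \<Rightarrow> nat \<Rightarrow> rat"
  assumes box: "\<And>y i. positions N y \<Longrightarrow> i < N \<Longrightarrow> B y i \<subseteq> {Suc (prev_pos y i)..y i}"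
    and "\<And>y. \<not> E y 0"
    and row_sum: "\<And>t y i j. positions N y \<Longrightarrow> i < N \<Longrightarrow> j < N \<Longrightarrow>
       (\<Sum>x\<in>B y i. F t x i j)
         = F (Suc t) (y i) i j - (if E y i then F (Suc t) (y (i - 1)) (i - 1) j else 0)"
    and diag: "\<And>i. i < N \<Longrightarrow> F 0 (Suc i) i i = 1"
    and upper: "\<And>i j. i < j \<Longrightarrow> j < N \<Longrightarrow> F 0 (Suc i) i j = 0"
    and last_row: "\<And>x j. N < x \<Longrightarrow> j < N \<Longrightarrow> F 0 x (N - 1) j = 0"
    and "positions N y"
  shows "of_nat (box_walks B N t y) = det (mat N N (\<lambda>(i, j). F t (y i) i j))"
  using \<open>positions N y\<close>
proof (induction t arbitrary: y)
  case 0
  thus ?case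
    using det_initial_positions[OF 0, of "F 0"] diag upper last_row by simp
next
  case (Suc t)
  have "of_nat (box_walks B N (Suc t) y) = (\<Sum>u\<in>PiE {0..<N} (B y). det (mat N N (\<lambda>(i, j). F t (u i) i j)))"
    using Suc.IH box_positions[OF Suc.prems _ box[OF Suc.prems]] by simp
  also have "\<dots> = det (mat N N (\<lambda>(i, j). \<Sum>x\<in>B y i. F t x i j))"
    using box[OF Suc.prems] by (intro det_sum_PiE_rows) (meson finite_atLeastAtMost finite_subset)
  also have "\<dots> = det (mat N N (\<lambda>(i, j). F (Suc t) (y i) i j
      - (if E y i then F (Suc t) (y (i - 1)) (i - 1) j else 0)))"
    using row_sum[OF Suc.prems] by (intro arg_cong[where f = det] eq_matI) auto
  also have "\<dots> = det (mat N N (\<lambda>(i, j). F (Suc t) (y i) i j))"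
    by (rule det_subtract_previous_rows[where R = "\<lambda>i j. F (Suc t) (y i) i j"]) fact
  finally show ?case .
qed

text \<open>The predecessors of a position vector in the two models: a thick line of the vertex model
  enters a row at most one column left of where it leaves it, a lattice path anywhere to the
  right of where its left neighbour leaves the row.\<close>

definition vertex_box :: "(nat \<Rightarrow> nat) \<Rightarrow> nat \<Rightarrow> nat set" where
  "vertex_box y i = {max (y i - 1) (Suc (prev_pos y i))..y i}"

definition path_box :: "(nat \<Rightarrow> nat) \<Rightarrow> nat \<Rightarrow> nat set" where
  "path_box y i = {Suc (prev_pos y i)..y i}"

lemma vertex_box_subset: "vertex_box y i \<subseteq> {Suc (prev_pos y i)..y i}"
  by (auto simp: vertex_box_def)

lemma path_box_subset: "path_box y i \<subseteq> {Suc (prev_pos y i)..y i}"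
  by (simp add: path_box_def)

lemma vertex_box_row_sum:
  assumes y: "positions N y" and i: "i < N"
  shows "(\<Sum>x\<in>vertex_box y i. zbinom (int t + int i - int j) (int x - int j - 1))
       = zbinom (int (Suc t) + int i - int j) (int (y i) - int j - 1)
         - (if 0 < i \<and> Suc (y (i - 1)) = y i
            then zbinom (int (Suc t) + int (i - 1) - int j) (int (y (i - 1)) - int j - 1) else 0)"
proof -
  define a where "a = int t + int i - int j"
  define b where "b = int (y i) - int j - 1"
  have Pascal: "zbinom (int (Suc t) + int i - int j) (int (y i) - int j - 1) = zbinom a b + zbinom a (b - 1)"
    using zbinom_Pascal[of a b] by (simp add: a_def b_def algebra_simps)
  have y_pos: "1 \<le> y i"
    using positions_ge[OF y i] by simp
  consider (two) "Suc (prev_pos y i) < y i" | (one) "Suc (prev_pos y i) = y i"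
    using positions_prev_pos_less[OF y i] by linarith
  thus ?thesis
  proof cases
    case two
    hence neg: "\<not> (0 < i \<and> Suc (y (i - 1)) = y i)" and "vertex_box y i = {y i - 1, y i}"
      by (auto simp: vertex_box_def prev_pos_def)
    moreover have "int (y i - 1) - int j - 1 = b - 1"
      using y_pos by (simp add: b_def of_nat_diff)
    ultimately have "(\<Sum>x\<in>vertex_box y i. zbinom (int t + int i - int j) (int x - int j - 1))
        = zbinom a (b - 1) + zbinom a b"
      using y_pos by (simp add: a_def b_def)
    thus ?thesis
      unfolding if_not_P[OF neg] using Pascal by simp
  next
    case one
    hence "vertex_box y i = {y i}"
      by (auto simp: vertex_box_def)
    moreover have "(if 0 < i \<and> Suc (y (i - 1)) = y i
            then zbinom (int (Suc t) + int (i - 1) - int j) (int (y (i - 1)) - int j - 1) else 0)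
          = zbinom a (b - 1)"
    proof (cases "i = 0")
      case False
      with one have "Suc (y (i - 1)) = y i" by (simp add: prev_pos_def)
      moreover from this have "int (y (i - 1)) - int j - 1 = b - 1"
        by (simp add: b_def flip: of_nat_Suc)
      moreover have "int (Suc t) + int (i - 1) - int j = a"
        using False by (simp add: a_def)
      ultimately show ?thesis using False by simp
    qed (use one in \<open>simp add: b_def prev_pos_def\<close>)
    ultimately show ?thesis
      using Pascal by (simp add: a_def b_def)
  qed
qed

lemma path_box_row_sum:
  assumes y: "positions N y" and i: "i < N"
  shows "(\<Sum>x\<in>path_box y i. zbinom (int x + int r - int j - 2) (int x - int j - 1))
       = zbinom (int (y i) + int (Suc r) - int j - 2) (int (y i) - int j - 1)
         - (if 0 < i then zbinom (int (y (i - 1)) + int (Suc r) - int j - 2) (int (y (i - 1)) - int j - 1)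
            else 0)"
proof -
  define g where "g x = zbinom (int x + int r - int j - 2) (int x - int j - 1)" for x :: nat
  define G where "G x = zbinom (int x + int r - int j - 1) (int x - int j - 1)" for x :: nat
  have G_Suc: "G (Suc x) - G x = g (Suc x)" for x
    using zbinom_Pascal[of "int x + int r - int j - 1" "int x - int j"] by (simp add: G_def g_def algebra_simps)
  have "prev_pos y i \<le> y i"
    using positions_prev_pos_less[OF y i] by simp
  have "(\<Sum>x\<in>path_box y i. g x) = (\<Sum>x = prev_pos y i..<y i. g (Suc x))"
    unfolding path_box_def atLeastLessThanSuc_atLeastAtMost[symmetric] by (rule sum.shift_bounds_Suc_ivl)
  also have "\<dots> = (\<Sum>x = prev_pos y i..<y i. G (Suc x) - G x)"
    by (simp only: G_Suc)
  also have "\<dots> = G (y i) - G (prev_pos y i)"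
    using \<open>prev_pos y i \<le> y i\<close> by (rule sum_Suc_diff')
  finally show ?thesis
    by (cases "i = 0") (simp_all add: g_def G_def prev_pos_def algebra_simps)
qed

lemma box_walks_vertex_box:
  assumes "positions N y"
  shows "of_nat (box_walks vertex_box N t y)
       = det (mat N N (\<lambda>(i, j). zbinom (int t + int i - int j) (int (y i) - int j - 1)))"
proof (rule box_walks_det[where E = "\<lambda>y i. 0 < i \<and> Suc (y (i - 1)) = y i"
      and F = "\<lambda>t x i j. zbinom (int t + int i - int j) (int x - int j - 1)", OF _ _ _ _ _ _ assms])
  fix t y' i j assume "positions N y'" "i < N"
  thus "(\<Sum>x\<in>vertex_box y' i. zbinom (int t + int i - int j) (int x - int j - 1))
      = zbinom (int (Suc t) + int i - int j) (int (y' i) - int j - 1)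
        - (if 0 < i \<and> Suc (y' (i - 1)) = y' i
           then zbinom (int (Suc t) + int (i - 1) - int j) (int (y' (i - 1)) - int j - 1) else 0)"
    by (rule vertex_box_row_sum)
next
  fix x j assume "N < x" "j < N"
  thus "zbinom (int 0 + int (N - 1) - int j) (int x - int j - 1) = 0"
    by (intro zbinom_eq_0) auto
qed (auto simp: vertex_box_def)

lemma box_walks_path_box:
  assumes "positions N y"
  shows "of_nat (box_walks path_box N r y)
       = det (mat N N (\<lambda>(i, j). zbinom (int (y i) + int r - int j - 2) (int (y i) - int j - 1)))"
proof (rule box_walks_det[where E = "\<lambda>y i. 0 < i"
      and F = "\<lambda>r x i j. zbinom (int x + int r - int j - 2) (int x - int j - 1)", OF _ _ _ _ _ _ assms])
  fix r y' i j assume "positions N y'" "i < N"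
  thus "(\<Sum>x\<in>path_box y' i. zbinom (int x + int r - int j - 2) (int x - int j - 1))
      = zbinom (int (y' i) + int (Suc r) - int j - 2) (int (y' i) - int j - 1)
        - (if 0 < i
           then zbinom (int (y' (i - 1)) + int (Suc r) - int j - 2) (int (y' (i - 1)) - int j - 1) else 0)"
    by (rule path_box_row_sum)
next
  fix x j assume "N < x" "j < N"
  thus "zbinom (int x + int 0 - int j - 2) (int x - int j - 1) = 0"
    by (intro zbinom_eq_0) auto
qed (auto simp: path_box_def)

section \<open>The four-vertex model as a walk of position vectors\<close>

lemma allowed_vertex_iff: "allowed_vertex s n w e \<longleftrightarrow> (e \<longleftrightarrow> s \<and> \<not> n) \<and> (w \<longleftrightarrow> n \<and> \<not> s)"
  by (auto simp: allowed_vertex_def)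

text \<open>\<open>S\<close> and \<open>T\<close> are the columns of the thick vertical edges below and above a row of
  vertices: every thick line goes straight up or, at a vertex of type \<open>c\<close>, turns right and
  leaves the row one column further to the right.\<close>

definition row_transition :: "nat \<Rightarrow> nat set \<Rightarrow> nat set \<Rightarrow> bool" where
  "row_transition L S T \<longleftrightarrow> S \<subseteq> {1..L} \<and> T \<subseteq> {1..L} \<and> T - S = Suc ` (S - T)"

lemma allowed_row_imp_row_transition:
  assumes S: "S \<subseteq> {1..L}" and T: "T \<subseteq> {1..L}" and h: "h \<subseteq> {0..L}"
    and "\<forall>x\<in>{1..L}. allowed_vertex (x \<in> S) (x \<in> T) (x - 1 \<in> h) (x \<in> h)" and "0 \<notin> h" and "L \<notin> h"
  shows "row_transition L S T \<and> h = S - T"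
proof -
  have east: "\<And>x. x \<in> {1..L} \<Longrightarrow> x \<in> h \<longleftrightarrow> x \<in> S - T"
    and west: "\<And>x. x \<in> {1..L} \<Longrightarrow> x - 1 \<in> h \<longleftrightarrow> x \<in> T - S"
    using assms(4) by (auto simp: allowed_vertex_iff)
  have h_eq: "h = S - T"
  proof (intro equalityI subsetI)
    fix x assume x: "x \<in> h"
    have "x \<le> L" using x h by auto
    moreover have "x \<noteq> 0" using x \<open>0 \<notin> h\<close> by metis
    ultimately show "x \<in> S - T" using east x by simp
  next
    fix x assume x: "x \<in> S - T"
    hence "x \<in> {1..L}" using S by auto
    thus "x \<in> h" using east x by simp
  qed
  have "T - S \<subseteq> Suc ` (S - T)"
  proof
    fix x assume x: "x \<in> T - S"
    hence "x \<in> {1..L}" using T by auto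
    hence "x - 1 \<in> S - T" and "x = Suc (x - 1)"
      using west x h_eq by auto
    thus "x \<in> Suc ` (S - T)" by (metis imageI)
  qed
  moreover have "Suc ` (S - T) \<subseteq> T - S"
  proof
    fix x assume "x \<in> Suc ` (S - T)"
    then obtain z where z: "z \<in> h" and x: "x = Suc z" using h_eq by auto
    have "z \<le> L" using z h by auto
    moreover have "z \<noteq> L" using z \<open>L \<notin> h\<close> by metis
    ultimately have "x \<in> {1..L}" using x by simp
    thus "x \<in> T - S" using west z x by fastforce
  qed
  ultimately show ?thesis
    using S T h_eq by (auto simp: row_transition_def)
qed

lemma row_transition_imp_allowed_row:
  assumes "row_transition L S T"
  shows "\<forall>x\<in>{1..L}. allowed_vertex (x \<in> S) (x \<in> T) (x - 1 \<in> S - T) (x \<in> S - T)"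
    and "0 \<notin> S - T" and "L \<notin> S - T"
proof -
  have S: "S \<subseteq> {1..L}" and T: "T \<subseteq> {1..L}" and shift: "T - S = Suc ` (S - T)"
    using assms by (auto simp: row_transition_def)
  have "x - 1 \<in> S - T \<longleftrightarrow> x \<in> T - S" if "x \<in> {1..L}" for x
    using that shift by (force simp: image_iff)
  thus "\<forall>x\<in>{1..L}. allowed_vertex (x \<in> S) (x \<in> T) (x - 1 \<in> S - T) (x \<in> S - T)"
    by (auto simp: allowed_vertex_iff)
  show "0 \<notin> S - T" using S by auto
  show "L \<notin> S - T"
  proof
    assume "L \<in> S - T"
    hence "Suc L \<in> T" using shift by auto
    thus False using T by auto
  qed
qed

lemma allowed_row_iff:
  assumes "S \<subseteq> {1..L}" and "T \<subseteq> {1..L}" and "h \<subseteq> {0..L}"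
  shows "(\<forall>x\<in>{1..L}. allowed_vertex (x \<in> S) (x \<in> T) (x - 1 \<in> h) (x \<in> h)) \<and> 0 \<notin> h \<and> L \<notin> h
     \<longleftrightarrow> row_transition L S T \<and> h = S - T"
  using allowed_row_imp_row_transition[OF assms] row_transition_imp_allowed_row by auto

definition slice :: "(nat \<times> nat) set \<Rightarrow> nat \<Rightarrow> nat set" where
  "slice V m = {x. (x, m) \<in> V}"

definition vertical_histories :: "nat \<Rightarrow> nat \<Rightarrow> nat \<Rightarrow> nat set \<Rightarrow> (nat \<times> nat) set set" where
  "vertical_histories L N t T = {V. V \<subseteq> {1..L} \<times> {0..t} \<and> slice V 0 = {1..N} \<and> slice V t = T \<and>
     (\<forall>s<t. row_transition L (slice V s) (slice V (Suc s)))}"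

definition turning_edges :: "nat \<Rightarrow> (nat \<times> nat) set \<Rightarrow> (nat \<times> nat) set" where
  "turning_edges M V = {(x, m). m \<in> {1..M} \<and> x \<in> slice V (m - 1) - slice V m}"

lemma slice_subset: "V \<subseteq> A \<times> B \<Longrightarrow> slice V m \<subseteq> A"
  by (auto simp: slice_def)

lemma config_row_iff:
  assumes "V \<subseteq> {1..L} \<times> {0..M}" and "H \<subseteq> {0..L} \<times> {1..M}"
  shows "(\<forall>n\<in>{1..L}. allowed_vertex ((n, m - 1) \<in> V) ((n, m) \<in> V) ((n - 1, m) \<in> H) ((n, m) \<in> H))
       \<and> (0, m) \<notin> H \<and> (L, m) \<notin> H
     \<longleftrightarrow> row_transition L (slice V (m - 1)) (slice V m) \<and> slice H m = slice V (m - 1) - slice V m"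
  using allowed_row_iff[OF slice_subset[OF assms(1)] slice_subset[OF assms(1)] slice_subset[OF assms(2)]]
  by (simp add: slice_def)

lemma four_vertex_config_imp_vertical_history:
  assumes config: "four_vertex_config L M N V H" and "N \<le> L"
  shows "V \<in> vertical_histories L N M {L - N + 1..L}" and "H = turning_edges M V"
proof -
  have V: "V \<subseteq> {1..L} \<times> {0..M}" and H: "H \<subseteq> {0..L} \<times> {1..M}"
    using config by (auto simp: four_vertex_config_def vert_edges_def horiz_edges_def)
  have rows: "row_transition L (slice V (m - 1)) (slice V m) \<and> slice H m = slice V (m - 1) - slice V m"
    if "m \<in> {1..M}" for m
    using config that config_row_iff[OF V H, of m] by (auto simp: four_vertex_config_def)
  have "slice V 0 = {1..N}" and "slice V M = {L - N + 1..L}"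
    using config V \<open>N \<le> L\<close> by (auto simp: four_vertex_config_def slice_def)
  moreover have "row_transition L (slice V s) (slice V (Suc s))" if "s < M" for s
    using rows[of "Suc s"] that by simp
  ultimately show "V \<in> vertical_histories L N M {L - N + 1..L}"
    using V by (simp add: vertical_histories_def)
  show "H = turning_edges M V"
  proof (intro equalityI subsetI)
    fix e assume "e \<in> H"
    thus "e \<in> turning_edges M V"
      using H rows by (force simp: turning_edges_def slice_def)
  next
    fix e assume "e \<in> turning_edges M V"
    thus "e \<in> H"
      using rows by (force simp: turning_edges_def slice_def)
  qed
qed

lemma vertical_history_imp_four_vertex_config:
  assumes "V \<in> vertical_histories L N M {L - N + 1..L}"
  shows "four_vertex_config L M N V (turning_edges M V)"
proof -
  have V: "V \<subseteq> {1..L} \<times> {0..M}"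
    and bottom: "slice V 0 = {1..N}" and top: "slice V M = {L - N + 1..L}"
    and steps: "\<And>s. s < M \<Longrightarrow> row_transition L (slice V s) (slice V (Suc s))"
    using assms by (auto simp: vertical_histories_def)
  have H: "turning_edges M V \<subseteq> {0..L} \<times> {1..M}"
    using slice_subset[OF V] by (force simp: turning_edges_def)
  have "slice (turning_edges M V) m = slice V (m - 1) - slice V m" if "m \<in> {1..M}" for m
    using that by (auto simp: turning_edges_def slice_def)
  moreover have "row_transition L (slice V (m - 1)) (slice V m)" if "m \<in> {1..M}" for m
  proof -
    have "m - 1 < M" and "Suc (m - 1) = m" using that by auto
    thus ?thesis using steps[of "m - 1"] by simp
  qed
  ultimately have "\<forall>n\<in>{1..L}. allowed_vertex ((n, m - 1) \<in> V) ((n, m) \<in> V)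
        ((n - 1, m) \<in> turning_edges M V) ((n, m) \<in> turning_edges M V)"
      and "(0, m) \<notin> turning_edges M V" and "(L, m) \<notin> turning_edges M V" if "m \<in> {1..M}" for m
    using config_row_iff[OF V H, of m] that by auto
  moreover have "(n, 0) \<in> V \<longleftrightarrow> n \<le> N" and "(n, M) \<in> V \<longleftrightarrow> L - N + 1 \<le> n" if "n \<in> {1..L}" for n
    using bottom top that by (auto simp: slice_def set_eq_iff)
  ultimately show ?thesis
    using V H by (auto simp: four_vertex_config_def vert_edges_def horiz_edges_def)
qed

lemma Z_eq_card_vertical_histories:
  assumes "N \<le> L"
  shows "Z L M N = card (vertical_histories L N M {L - N + 1..L})"
proof -
  have "{(V, H). four_vertex_config L M N V H}
      = (\<lambda>V. (V, turning_edges M V)) ` vertical_histories L N M {L - N + 1..L}"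
    using four_vertex_config_imp_vertical_history[OF _ assms] vertical_history_imp_four_vertex_config
    by fastforce
  thus ?thesis
    by (simp add: Z_def card_image inj_on_def)
qed

lemma slice_Un_times: "slice (V \<union> T \<times> {m}) s = (if s = m then slice V s \<union> T else slice V s)"
  by (auto simp: slice_def)

lemma slice_eq_empty: "V \<subseteq> A \<times> B \<Longrightarrow> s \<notin> B \<Longrightarrow> slice V s = {}"
  by (auto simp: slice_def)

lemma vertical_histories_0:
  assumes "N \<le> L"
  shows "vertical_histories L N 0 T = (if T = {1..N} then {{1..N} \<times> {0}} else {})"
proof -
  have "V \<in> vertical_histories L N 0 T \<longleftrightarrow> T = {1..N} \<and> V = {1..N} \<times> {0}" for V
  proof
    assume V: "V \<in> vertical_histories L N 0 T"
    hence "V \<subseteq> UNIV \<times> {0}" and "slice V 0 = {1..N}" and "T = {1..N}"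
      by (auto simp: vertical_histories_def)
    thus "T = {1..N} \<and> V = {1..N} \<times> {0}"
      by (auto simp: slice_def)
  qed (use assms in \<open>auto simp: vertical_histories_def slice_def\<close>)
  thus ?thesis by auto
qed

lemma vertical_histories_Suc:
  "vertical_histories L N (Suc t) T
     = (\<Union>S\<in>{S. row_transition L S T}. (\<lambda>V. V \<union> T \<times> {Suc t}) ` vertical_histories L N t S)"
proof (intro equalityI subsetI)
  fix V assume V: "V \<in> vertical_histories L N (Suc t) T"
  define V' where "V' = V \<inter> UNIV \<times> {0..t}"
  have V_sub: "V \<subseteq> {1..L} \<times> {0..Suc t}" and "slice V (Suc t) = T"
    and steps: "\<And>s. s < Suc t \<Longrightarrow> row_transition L (slice V s) (slice V (Suc s))"
    using V by (auto simp: vertical_histories_def)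
  hence "V = V' \<union> T \<times> {Suc t}"
    by (auto simp: V'_def slice_def le_Suc_eq)
  moreover have "slice V' s = slice V s" if "s \<le> t" for s
    using that by (auto simp: V'_def slice_def)
  hence "V' \<in> vertical_histories L N t (slice V t)"
    using V V_sub by (auto simp: vertical_histories_def V'_def)
  moreover have "row_transition L (slice V t) T"
    using steps[of t] \<open>slice V (Suc t) = T\<close> by simp
  ultimately show "V \<in> (\<Union>S\<in>{S. row_transition L S T}. (\<lambda>V. V \<union> T \<times> {Suc t}) ` vertical_histories L N t S)"
    by (intro UN_I[of "slice V t"] image_eqI[of _ _ V']) simp_all
next
  fix V assume "V \<in> (\<Union>S\<in>{S. row_transition L S T}. (\<lambda>V. V \<union> T \<times> {Suc t}) ` vertical_histories L N t S)"
  then obtain S V' where tr: "row_transition L S T" and V': "V' \<in> vertical_histories L N t S"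
    and V: "V = V' \<union> T \<times> {Suc t}"
    by auto
  have V'_sub: "V' \<subseteq> {1..L} \<times> {0..t}"
    using V' by (simp add: vertical_histories_def)
  have slices: "slice V s = (if s = Suc t then T else slice V' s)" for s
    using slice_eq_empty[OF V'_sub, of "Suc t"] by (simp add: V slice_Un_times)
  have "row_transition L (slice V s) (slice V (Suc s))" if "s < Suc t" for s
    using that V' tr by (cases "s = t") (auto simp: slices vertical_histories_def)
  moreover have "V \<subseteq> {1..L} \<times> {0..Suc t}"
    using V'_sub tr by (auto simp: V row_transition_def)
  moreover have "slice V 0 = {1..N}" and "slice V (Suc t) = T"
    using V' by (simp_all add: slices vertical_histories_def)
  ultimately show "V \<in> vertical_histories L N (Suc t) T"
    by (simp add: vertical_histories_def)
qed

lemma finite_vertical_histories: "finite (vertical_histories L N t T)"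
  by (rule finite_subset[of _ "Pow ({1..L} \<times> {0..t})"]) (auto simp: vertical_histories_def)

lemma card_vertical_histories_Suc:
  "card (vertical_histories L N (Suc t) T)
     = (\<Sum>S | row_transition L S T. card (vertical_histories L N t S))"
proof -
  let ?extend = "\<lambda>V. V \<union> T \<times> {Suc t}"
  have disjoint: "V \<inter> T \<times> {Suc t} = {}" if "V \<in> vertical_histories L N t S" for V S
    using that by (auto simp: vertical_histories_def)
  have inj: "inj_on ?extend (vertical_histories L N t S)" for S
  proof (rule inj_onI)
    fix V W assume "V \<in> vertical_histories L N t S" "W \<in> vertical_histories L N t S"
      and "?extend V = ?extend W"
    thus "V = W" using disjoint by blast
  qed
  have "slice (?extend V) t = S" if "V \<in> vertical_histories L N t S" for V S
    using that by (simp add: slice_Un_times vertical_histories_def)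
  hence "?extend V \<noteq> ?extend W"
    if "V \<in> vertical_histories L N t S" "W \<in> vertical_histories L N t S'" "S \<noteq> S'" for V W S S'
    using that by metis
  hence "?extend ` vertical_histories L N t S \<inter> ?extend ` vertical_histories L N t S' = {}"
    if "S \<noteq> S'" for S S'
    using that by auto
  moreover have "finite {S. row_transition L S T}"
    by (rule finite_subset[of _ "Pow {1..L}"]) (auto simp: row_transition_def)
  ultimately have "card (vertical_histories L N (Suc t) T)
      = (\<Sum>S | row_transition L S T. card (?extend ` vertical_histories L N t S))"
    unfolding vertical_histories_Suc by (intro card_UN_disjoint) (auto simp: finite_vertical_histories)
  thus ?thesis
    by (simp add: card_image[OF inj])
qed

lemma box_hit_position:
  assumes y: "positions N y" and u: "u \<in> PiE {0..<N} B"
    and B: "\<And>i. i < N \<Longrightarrow> B i \<subseteq> {Suc (prev_pos y i)..y i}"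
    and "i < N" "k < N" "u k = y i"
  shows "k = i"
proof (rule ccontr)
  assume "k \<noteq> i"
  moreover have "\<not> i < k"
  proof
    assume "i < k"
    with box_interlacing[OF y u B this \<open>k < N\<close>] \<open>u k = y i\<close> show False by simp
  qed
  moreover have "u k \<le> y k"
    using PiE_mem[OF u, of k] B[of k] \<open>k < N\<close> by auto
  hence "\<not> k < i"
    using positions_less[OF y, of k i] assms(4,6) by auto
  ultimately show False by simp
qed

lemma vertex_box_hits:
  assumes y: "positions N y" and u: "u \<in> PiE {0..<N} (vertex_box y)" and i: "i < N"
  shows "u i \<in> y ` {0..<N} \<longleftrightarrow> u i = y i"
    and "y i \<in> u ` {0..<N} \<longleftrightarrow> u i = y i"
  using box_hit_position[OF y u vertex_box_subset] i by force+

lemma vertex_box_step: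
  assumes "u \<in> PiE {0..<N} (vertex_box y)" and "i < N" and "u i \<noteq> y i"
  shows "y i = Suc (u i)"
  using PiE_mem[OF assms(1), of i] assms(2,3) by (auto simp: vertex_box_def)

lemma row_transition_vertex_box:
  assumes y: "positions N y" and y_le: "\<And>i. i < N \<Longrightarrow> y i \<le> L"
    and u: "u \<in> PiE {0..<N} (vertex_box y)"
  shows "row_transition L (u ` {0..<N}) (y ` {0..<N})"
proof -
  let ?S = "u ` {0..<N}" and ?T = "y ` {0..<N}"
  have "positions N u"
    by (rule box_positions[OF y u vertex_box_subset])
  have "?S \<subseteq> {1..L}"
    using positions_ge[OF \<open>positions N u\<close>] PiE_mem[OF u] y_le by (fastforce simp: vertex_box_def)
  moreover have "?T \<subseteq> {1..L}"
    using positions_ge[OF y] y_le by fastforce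
  moreover have "?T - ?S = Suc ` (?S - ?T)"
  proof (intro equalityI subsetI)
    fix x assume "x \<in> ?T - ?S"
    then obtain i where i: "i < N" "x = y i" "u i \<noteq> y i"
      using vertex_box_hits(2)[OF y u] by auto
    hence "u i \<in> ?S - ?T" and "x = Suc (u i)"
      using vertex_box_hits(1)[OF y u] vertex_box_step[OF u] by auto
    thus "x \<in> Suc ` (?S - ?T)" by blast
  next
    fix x assume "x \<in> Suc ` (?S - ?T)"
    then obtain k where k: "k < N" "x = Suc (u k)" "u k \<noteq> y k"
      using vertex_box_hits(1)[OF y u] by auto
    thus "x \<in> ?T - ?S"
      using vertex_box_hits(2)[OF y u] vertex_box_step[OF u] by force
  qed
  ultimately show ?thesis
    by (simp add: row_transition_def)
qed

lemma row_transition_shift_left: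
  assumes "row_transition L S T" and "x \<in> T" and "x \<notin> S"
  shows "x - 1 \<in> S - T" and "x = Suc (x - 1)"
proof -
  have "x \<in> Suc ` (S - T)"
    using assms by (auto simp: row_transition_def)
  thus "x - 1 \<in> S - T" and "x = Suc (x - 1)" by auto
qed

lemma row_transition_image_eq:
  fixes y :: "nat \<Rightarrow> nat"
  assumes tr: "row_transition L S (y ` {0..<N})"
  shows "S = (\<lambda>i. if y i \<in> S then y i else y i - 1) ` {0..<N}"
proof (intro equalityI subsetI)
  fix x assume x: "x \<in> S"
  show "x \<in> (\<lambda>i. if y i \<in> S then y i else y i - 1) ` {0..<N}"
  proof (cases "x \<in> y ` {0..<N}")
    case True
    then obtain i where "i < N" "x = y i" by auto
    thus ?thesis using x by (auto intro!: image_eqI[of _ _ i])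
  next
    case False
    hence "Suc x \<in> y ` {0..<N} - S"
      using tr x by (auto simp: row_transition_def)
    then obtain i where "i < N" "Suc x = y i" "y i \<notin> S" by auto
    thus ?thesis by (auto intro!: image_eqI[of _ _ i])
  qed
qed (use row_transition_shift_left[OF tr] in auto)

lemma row_transition_in_vertex_box:
  assumes y: "positions N y" and tr: "row_transition L S (y ` {0..<N})"
  shows "restrict (\<lambda>i. if y i \<in> S then y i else y i - 1) {0..<N} \<in> PiE {0..<N} (vertex_box y)"
proof (rule PiE_I)
  fix i assume "i \<in> {0..<N}"
  hence i: "i < N" by simp
  have "Suc (prev_pos y i) < y i" if "y i \<notin> S"
  proof -
    have "y i - 1 \<in> S - y ` {0..<N}" and "y i = Suc (y i - 1)"
      using row_transition_shift_left[OF tr _ that] i by auto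
    moreover have "prev_pos y i \<in> y ` {0..<N} \<union> {0}"
      using i by (auto simp: prev_pos_def intro!: image_eqI[of _ _ "i - 1"])
    moreover have "0 \<notin> S"
      using tr by (auto simp: row_transition_def)
    ultimately have "prev_pos y i \<noteq> y i - 1" by (metis DiffD1 DiffD2 UnE singletonD)
    thus ?thesis using positions_prev_pos_less[OF y i] by simp
  qed
  moreover have "Suc (prev_pos y i) \<le> y i"
    using positions_prev_pos_less[OF y i] by simp
  ultimately show "restrict (\<lambda>i. if y i \<in> S then y i else y i - 1) {0..<N} i \<in> vertex_box y i"
    using i by (auto simp: vertex_box_def)
qed simp

lemma inj_on_image_vertex_box:
  assumes y: "positions N y"
  shows "inj_on (\<lambda>u. u ` {0..<N}) (PiE {0..<N} (vertex_box y))"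
proof (rule inj_onI)
  fix u v assume u: "u \<in> PiE {0..<N} (vertex_box y)" and v: "v \<in> PiE {0..<N} (vertex_box y)"
    and eq: "u ` {0..<N} = v ` {0..<N}"
  have "u i = v i" if "i < N" for i
    using vertex_box_hits(2)[OF y u that] vertex_box_hits(2)[OF y v that] eq
      vertex_box_step[OF u that] vertex_box_step[OF v that] by (metis Suc_inject)
  moreover have "u i = v i" if "i \<notin> {0..<N}" for i
    using PiE_arb[OF u that] PiE_arb[OF v that] by simp
  ultimately show "u = v"
    by (metis atLeastLessThan_iff ext zero_le)
qed

lemma card_vertical_histories:
  assumes "N \<le> L" and "positions N y" and "\<And>i. i < N \<Longrightarrow> y i \<le> L"
  shows "card (vertical_histories L N t (y ` {0..<N})) = box_walks vertex_box N t y"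
  using assms(2,3)
proof (induction t arbitrary: y)
  case 0
  thus ?case
    using positions_eq_Suc_iff[OF "0.prems"(1)] by (simp add: vertical_histories_0[OF assms(1)])
next
  case (Suc t)
  note y = Suc.prems(1) and y_le = Suc.prems(2)
  have "S \<in> (\<lambda>u. u ` {0..<N}) ` PiE {0..<N} (vertex_box y)" if "row_transition L S (y ` {0..<N})" for S
    using row_transition_in_vertex_box[OF y that] row_transition_image_eq[OF that]
    by (intro image_eqI[of _ _ "restrict (\<lambda>i. if y i \<in> S then y i else y i - 1) {0..<N}"]) simp_all
  hence preds: "{S. row_transition L S (y ` {0..<N})} = (\<lambda>u. u ` {0..<N}) ` PiE {0..<N} (vertex_box y)"
    using row_transition_vertex_box[OF y y_le] by auto
  have "card (vertical_histories L N (Suc t) (y ` {0..<N}))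
      = (\<Sum>u\<in>PiE {0..<N} (vertex_box y). card (vertical_histories L N t (u ` {0..<N})))"
    unfolding card_vertical_histories_Suc preds by (rule sum.reindex[OF inj_on_image_vertex_box[OF y], unfolded comp_def])
  also have "\<dots> = (\<Sum>u\<in>PiE {0..<N} (vertex_box y). box_walks vertex_box N t u)"
  proof (intro sum.cong refl Suc.IH)
    fix u assume u: "u \<in> PiE {0..<N} (vertex_box y)"
    show "positions N u"
      by (rule box_positions[OF y u vertex_box_subset])
    fix i assume "i < N"
    thus "u i \<le> L"
      using PiE_mem[OF u, of i] y_le[of i] by (auto simp: vertex_box_def)
  qed
  finally show ?case by simp
qed

section \<open>Non-intersecting lattice paths as a walk of position vectors\<close>

definition unit_step :: "nat \<times> nat \<Rightarrow> nat \<times> nat \<Rightarrow> bool" where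
  "unit_step a b \<longleftrightarrow> b = (fst a + 1, snd a) \<or> b = (fst a, snd a + 1)"

lemma up_right_path_iff: "up_right_path p \<longleftrightarrow> p \<noteq> [] \<and> successively unit_step p"
  unfolding up_right_path_def successively_conv_nth unit_step_def by auto

lemma successively_unit_step_snd_le_last:
  "successively unit_step p \<Longrightarrow> z \<in> set p \<Longrightarrow> snd z \<le> snd (last p)"
proof (induction p rule: rev_induct)
  case (snoc x xs)
  thus ?case
    by (cases "xs = []") (auto simp: successively_append_iff unit_step_def)
qed simp

definition row_segment :: "nat \<Rightarrow> nat \<Rightarrow> nat \<Rightarrow> (nat \<times> nat) list" where
  "row_segment a b r = map (\<lambda>x. (x, r)) [a..<Suc b]"

lemma row_segment_simps:
  assumes "a \<le> b"
  shows "row_segment a b r \<noteq> []" and "hd (row_segment a b r) = (a, r)"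
    and "last (row_segment a b r) = (b, r)"
proof -
  show "row_segment a b r \<noteq> []" and "last (row_segment a b r) = (b, r)"
    using assms by (simp_all add: row_segment_def)
  show "hd (row_segment a b r) = (a, r)"
    using assms by (simp add: row_segment_def upt_conv_Cons del: upt_Suc)
qed

lemma set_row_segment [simp]: "set (row_segment a b r) = {a..b} \<times> {r}"
  by (auto simp: row_segment_def)

lemma successively_row_segment: "successively unit_step (row_segment a b r)"
  by (simp add: row_segment_def successively_conv_nth unit_step_def del: upt_Suc)

lemma row_segment_Suc: "a \<le> Suc b \<Longrightarrow> row_segment a (Suc b) r = row_segment a b r @ [(Suc b, r)]"
  by (simp add: row_segment_def)

lemma successively_append_row_segment:
  assumes "successively unit_step (p @ [(a, r)])" and "a \<le> b"
  shows "successively unit_step (p @ row_segment a b r)"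
proof -
  have "row_segment a b r = (a, r) # row_segment (Suc a) b r"
    using assms(2) by (simp add: row_segment_def upt_conv_Cons)
  thus ?thesis
    using assms(1) successively_row_segment[of a b r] by (auto simp: successively_append_iff)
qed

lemma split_top_row:
  assumes "successively unit_step q" and "q \<noteq> []" and "\<forall>z\<in>set q. snd z \<le> c"
    and "snd (last q) = c"
  shows "\<exists>p a. q = p @ row_segment a (fst (last q)) c \<and> a \<le> fst (last q)
           \<and> (\<forall>z\<in>set p. snd z < c) \<and> successively unit_step (p @ [(a, c)])"
  using assms
proof (induction q rule: rev_induct)
  case (snoc z q)
  show ?case
  proof (cases "q \<noteq> [] \<and> snd (last q) = c")
    case True
    have step: "unit_step (last q) z" and q: "successively unit_step q"
      using snoc.prems(1) True by (auto simp: successively_append_iff)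
    from snoc.IH[OF q] True snoc.prems(3) obtain p a where
      p: "q = p @ row_segment a (fst (last q)) c" "a \<le> fst (last q)"
         "\<forall>z\<in>set p. snd z < c" "successively unit_step (p @ [(a, c)])"
      by auto
    have "z = (Suc (fst (last q)), c)"
      using step True snoc.prems(4) by (cases z) (auto simp: unit_step_def)
    thus ?thesis
      using p by (intro exI[of _ p] exI[of _ a]) (auto simp: row_segment_Suc)
  next
    case False
    have "snd z = c" using snoc.prems(4) by simp
    moreover have "\<forall>x\<in>set q. snd x < c"
    proof (cases "q = []")
      case False': False
      have "unit_step (last q) z" and "successively unit_step q"
        using snoc.prems(1) False' by (auto simp: successively_append_iff)
      moreover have "snd (last q) < c"
      proof -
        have "snd (last q) \<le> c" using snoc.prems(3) last_in_set[OF False'] by auto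
        moreover have "snd (last q) \<noteq> c" using False False' by auto
        ultimately show ?thesis by simp
      qed
      ultimately show ?thesis
        using successively_unit_step_snd_le_last le_less_trans by blast
    qed simp
    ultimately show ?thesis
      using snoc.prems(1) by (intro exI[of _ q] exI[of _ "fst z"]) (auto simp: row_segment_def)
  qed
qed simp

definition path_families :: "nat \<Rightarrow> nat \<Rightarrow> nat \<Rightarrow> (nat \<Rightarrow> nat) \<Rightarrow> (nat \<Rightarrow> (nat \<times> nat) list) set" where
  "path_families L N r w = {P.
     (\<forall>i<N. up_right_path (P i) \<and> set (P i) \<subseteq> {1..L} \<times> {1..r} \<and>
            hd (P i) = (Suc i, 1) \<and> last (P i) = (w i, r)) \<and>
     (\<forall>i. N \<le> i \<longrightarrow> P i = []) \<and>
     (\<forall>i<N. \<forall>k<N. i \<noteq> k \<longrightarrow> set (P i) \<inter> set (P k) = {})}"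

lemma path_familiesD:
  assumes "P \<in> path_families L N r w"
  shows "\<And>i. i < N \<Longrightarrow> up_right_path (P i)" and "\<And>i. i < N \<Longrightarrow> set (P i) \<subseteq> {1..L} \<times> {1..r}"
    and "\<And>i. i < N \<Longrightarrow> hd (P i) = (Suc i, 1)" and "\<And>i. i < N \<Longrightarrow> last (P i) = (w i, r)"
    and "\<And>i. N \<le> i \<Longrightarrow> P i = []"
    and "\<And>i k. i < N \<Longrightarrow> k < N \<Longrightarrow> i \<noteq> k \<Longrightarrow> set (P i) \<inter> set (P k) = {}"
  using assms by (auto simp: path_families_def)

lemma ball_atLeastAtMost_Suc: "(\<forall>j\<in>{1..N}. R j) \<longleftrightarrow> (\<forall>i<N. R (Suc i))"
proof
  assume R: "\<forall>i<N. R (Suc i)"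
  show "\<forall>j\<in>{1..N}. R j"
  proof
    fix j assume "j \<in> {1..N}"
    then obtain i where "j = Suc i" and "i < N" by (cases j) auto
    thus "R j" using R by simp
  qed
qed auto

lemma card_path_tuples: "card (path_tuples L K N) = card (path_families L N K (\<lambda>i. L - N + Suc i))"
proof (rule bij_betw_same_card, rule bij_betw_byWitness[where f' = "\<lambda>Q j. if j = 0 then [] else Q (j - 1)"])
  show "\<forall>P\<in>path_tuples L K N. (\<lambda>j. if j = 0 then [] else P (Suc (j - 1))) = P"
    by (auto simp: path_tuples_def fun_eq_iff)
  show "\<forall>Q\<in>path_families L N K (\<lambda>i. L - N + Suc i). (\<lambda>i. if Suc i = 0 then [] else Q (Suc i - 1)) = Q"
    by simp
  show "(\<lambda>P i. P (Suc i)) ` path_tuples L K N \<subseteq> path_families L N K (\<lambda>i. L - N + Suc i)"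
  proof (intro image_subsetI)
    fix P assume "P \<in> path_tuples L K N"
    thus "(\<lambda>i. P (Suc i)) \<in> path_families L N K (\<lambda>i. L - N + Suc i)"
      unfolding path_tuples_def ball_atLeastAtMost_Suc by (auto simp: path_families_def)
  qed
  show "(\<lambda>Q j. if j = 0 then [] else Q (j - 1)) ` path_families L N K (\<lambda>i. L - N + Suc i) \<subseteq> path_tuples L K N"
  proof (intro image_subsetI)
    fix Q assume Q: "Q \<in> path_families L N K (\<lambda>i. L - N + Suc i)"
    hence "Q (j - 1) = []" if "j \<notin> {1..N}" "j \<noteq> 0" for j
      using that by (simp add: path_families_def)
    thus "(\<lambda>j. if j = 0 then [] else Q (j - 1)) \<in> path_tuples L K N"
      using Q unfolding path_tuples_def ball_atLeastAtMost_Suc by (auto simp: path_families_def)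
  qed
qed

lemma path_in_first_row:
  assumes "up_right_path q" and "set q \<subseteq> UNIV \<times> {1}"
  shows "q = row_segment (fst (hd q)) (fst (last q)) 1 \<and> fst (hd q) \<le> fst (last q)"
proof -
  have q: "successively unit_step q" "q \<noteq> []"
    using assms(1) by (auto simp: up_right_path_iff)
  moreover have "snd (last q) = 1"
    using assms(2) last_in_set[OF q(2)] by auto
  moreover have "\<forall>z\<in>set q. snd z \<le> 1"
    using assms(2) by auto
  ultimately obtain p a where p: "q = p @ row_segment a (fst (last q)) 1" "a \<le> fst (last q)"
    "\<forall>z\<in>set p. snd z < 1"
    using split_top_row[of q 1] by blast
  have "set p \<subseteq> set q"
    by (subst p(1)) simp
  hence "\<forall>z\<in>set p. snd z = 1"
    using assms(2) by auto
  hence "p = []"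
    using p(3) by (cases p) auto
  hence q_eq: "q = row_segment a (fst (last q)) 1"
    using p(1) by simp
  have "fst (hd q) = a"
    by (subst q_eq) (simp add: row_segment_simps[OF p(2)])
  thus ?thesis
    using q_eq p(2) by blast
qed

definition first_row_family :: "nat \<Rightarrow> (nat \<Rightarrow> nat) \<Rightarrow> nat \<Rightarrow> (nat \<times> nat) list" where
  "first_row_family N w i = (if i < N then row_segment (Suc i) (w i) 1 else [])"

lemma first_row_path:
  assumes Q: "Q \<in> path_families L N 1 w" and i: "i < N"
  shows "Q i = row_segment (Suc i) (w i) 1" and "Suc i \<le> w i"
proof -
  have "set (Q i) \<subseteq> UNIV \<times> {1}"
    using path_familiesD(2)[OF Q i] by auto
  from path_in_first_row[OF path_familiesD(1)[OF Q i] this]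
  show "Q i = row_segment (Suc i) (w i) 1" and "Suc i \<le> w i"
    unfolding path_familiesD(3,4)[OF Q i] fst_conv by simp_all
qed

lemma first_row_family_mem:
  assumes w: "positions N w" and w_le: "\<And>i. i < N \<Longrightarrow> w i \<le> L"
    and box: "\<And>i. i < N \<Longrightarrow> Suc i \<in> path_box w i"
  shows "first_row_family N w \<in> path_families L N 1 w"
proof -
  have sep: "w i < Suc k" if "i < k" "k < N" for i k
  proof -
    have "prev_pos w k \<le> k" using box[OF that(2)] by (simp add: path_box_def)
    thus ?thesis using positions_le_prev_pos[OF w that] by simp
  qed
  have "set (first_row_family N w i) \<inter> set (first_row_family N w k) = {}"
    if "i < N" "k < N" "i \<noteq> k" for i k
  proof (cases "i < k")
    case True
    thus ?thesis using sep[OF True] that by (auto simp: first_row_family_def)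
  next
    case False
    hence "k < i" using that(3) by simp
    thus ?thesis using sep[OF \<open>k < i\<close>] that by (auto simp: first_row_family_def)
  qed
  moreover have "up_right_path (first_row_family N w i)" and "hd (first_row_family N w i) = (Suc i, 1)"
    and "last (first_row_family N w i) = (w i, 1)" if "i < N" for i
    using box[OF that] that row_segment_simps[of "Suc i" "w i" 1]
    by (auto simp: first_row_family_def up_right_path_iff successively_row_segment path_box_def)
  moreover have "set (first_row_family N w i) \<subseteq> {1..L} \<times> {1..1}" if "i < N" for i
    using w_le[OF that] that by (auto simp: first_row_family_def)
  ultimately show ?thesis
    by (auto simp: path_families_def first_row_family_def)
qed

lemma path_families_1_empty:
  assumes i: "i < N" and "Suc i \<notin> path_box w i"
  shows "path_families L N 1 w = {}"
proof (rule ccontr)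
  assume "path_families L N 1 w \<noteq> {}"
  then obtain Q where Q: "Q \<in> path_families L N 1 w" by auto
  hence "0 < i" and k: "Suc i \<le> w (i - 1)"
    using first_row_path(2)[OF Q i] assms(2) by (auto simp: path_box_def prev_pos_def split: if_splits)
  hence "i - 1 < N" and "Suc (i - 1) = i" using i by auto
  hence "(Suc i, 1) \<in> set (Q (i - 1))" and "(Suc i, 1) \<in> set (Q i)"
    using first_row_path[OF Q \<open>i - 1 < N\<close>] first_row_path[OF Q i] k by auto
  moreover have "set (Q (i - 1)) \<inter> set (Q i) = {}"
    using path_familiesD(6)[OF Q \<open>i - 1 < N\<close> i] \<open>0 < i\<close> by simp
  ultimately show False by blast
qed

lemma path_families_1:
  assumes "positions N w" and "\<And>i. i < N \<Longrightarrow> w i \<le> L"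
  shows "path_families L N 1 w = (if \<forall>i<N. Suc i \<in> path_box w i then {first_row_family N w} else {})"
proof (cases "\<forall>i<N. Suc i \<in> path_box w i")
  case True
  hence box: "\<And>i. i < N \<Longrightarrow> Suc i \<in> path_box w i" by blast
  have "Q = first_row_family N w" if Q: "Q \<in> path_families L N 1 w" for Q
  proof
    fix i show "Q i = first_row_family N w i"
    proof (cases "i < N")
      case True
      thus ?thesis using first_row_path(1)[OF Q True] by (simp add: first_row_family_def)
    next
      case False
      thus ?thesis using path_familiesD(5)[OF Q, of i] by (simp add: first_row_family_def)
    qed
  qed
  moreover have "first_row_family N w \<in> path_families L N 1 w"
    by (rule first_row_family_mem[OF assms box])
  ultimately have "path_families L N 1 w = {first_row_family N w}"
    by blast
  thus ?thesis
    using True by simp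
next
  case False
  thus ?thesis
    using path_families_1_empty by auto
qed

definition extend_family ::
  "nat \<Rightarrow> nat \<Rightarrow> (nat \<Rightarrow> nat) \<Rightarrow> (nat \<Rightarrow> nat) \<Rightarrow> (nat \<Rightarrow> (nat \<times> nat) list) \<Rightarrow> nat \<Rightarrow> (nat \<times> nat) list" where
  "extend_family N r w u P i = (if i < N then P i @ row_segment (u i) (w i) (Suc r) else [])"

lemma set_extend_family:
  "i < N \<Longrightarrow> set (extend_family N r w u P i) = set (P i) \<union> {u i..w i} \<times> {Suc r}"
  by (simp add: extend_family_def)

lemma extend_family_disjoint:
  assumes w: "positions N w" and u: "u \<in> PiE {0..<N} (path_box w)" and P: "P \<in> path_families L N r u"
    and i: "i < N" and k: "k < N" and "i \<noteq> k"
  shows "set (extend_family N r w u P i) \<inter> set (extend_family N r w u P k) = {}"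
proof -
  have "{u i..w i} \<inter> {u k..w k} = {}"
  proof (cases "i < k")
    case True
    thus ?thesis using box_interlacing[OF w u path_box_subset True k] by auto
  next
    case False
    hence "k < i" using \<open>i \<noteq> k\<close> by simp
    thus ?thesis using box_interlacing[OF w u path_box_subset \<open>k < i\<close> i] by auto
  qed
  moreover have "set (P i) \<inter> set (P k) = {}"
    using path_familiesD(6)[OF P i k \<open>i \<noteq> k\<close>] .
  moreover have "set (P i) \<subseteq> UNIV \<times> {1..r}" and "set (P k) \<subseteq> UNIV \<times> {1..r}"
    using path_familiesD(2)[OF P i] path_familiesD(2)[OF P k] by auto
  ultimately show ?thesis
    unfolding set_extend_family[OF i] set_extend_family[OF k] by auto
qed

lemma extend_family_mem:
  assumes w: "positions N w" and w_le: "\<And>i. i < N \<Longrightarrow> w i \<le> L"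
    and u: "u \<in> PiE {0..<N} (path_box w)" and P: "P \<in> path_families L N r u"
  shows "extend_family N r w u P \<in> path_families L N (Suc r) w"
proof -
  have u_bounds: "1 \<le> u i \<and> u i \<le> w i" if "i < N" for i
    using PiE_mem[OF u, of i] that by (auto simp: path_box_def)
  have "up_right_path (extend_family N r w u P i)" if i: "i < N" for i
  proof -
    have "P i \<noteq> []" and "successively unit_step (P i)"
      using path_familiesD(1)[OF P i] by (auto simp: up_right_path_iff)
    hence "successively unit_step (P i @ [(u i, Suc r)])"
      using path_familiesD(4)[OF P i] by (auto simp: successively_append_iff unit_step_def)
    thus ?thesis
      using successively_append_row_segment u_bounds[OF i] \<open>P i \<noteq> []\<close> i
      by (simp add: up_right_path_iff extend_family_def)
  qed
  moreover have "set (extend_family N r w u P i) \<subseteq> {1..L} \<times> {1..Suc r}" if i: "i < N" for i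
    using set_extend_family[OF i] path_familiesD(2)[OF P i] u_bounds[OF i] w_le[OF i] by auto
  moreover have "hd (extend_family N r w u P i) = (Suc i, 1)" if i: "i < N" for i
  proof -
    have "P i \<noteq> []" using path_familiesD(1)[OF P i] by (simp add: up_right_path_iff)
    thus ?thesis using path_familiesD(3)[OF P i] i by (simp add: extend_family_def)
  qed
  moreover have "last (extend_family N r w u P i) = (w i, Suc r)" if i: "i < N" for i
    using row_segment_simps(1,3)[of "u i" "w i" "Suc r"] u_bounds[OF i] i by (simp add: extend_family_def)
  moreover have "set (extend_family N r w u P i) \<inter> set (extend_family N r w u P k) = {}"
    if "i < N" and "k < N" and "i \<noteq> k" for i k
    using extend_family_disjoint[OF w u P that] .
  ultimately show ?thesis
    by (simp add: path_families_def extend_family_def)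
qed

lemma extend_family_inj:
  "inj_on (\<lambda>(u, P). extend_family N r w u P) (Sigma (PiE {0..<N} (path_box w)) (path_families L N r))"
proof (rule inj_onI, clarify)
  fix u P u' P'
  assume u: "u \<in> PiE {0..<N} (path_box w)" and P: "P \<in> path_families L N r u"
    and u': "u' \<in> PiE {0..<N} (path_box w)" and P': "P' \<in> path_families L N r u'"
    and eq: "extend_family N r w u P = extend_family N r w u' P'"
  have same: "u i = u' i \<and> P i = P' i" if i: "i < N" for i
  proof -
    have Q: "P i @ row_segment (u i) (w i) (Suc r) = P' i @ row_segment (u' i) (w i) (Suc r)"
      using fun_cong[OF eq, of i] i by (simp add: extend_family_def)
    have "u i \<le> w i" and "u' i \<le> w i"
      using PiE_mem[OF u, of i] PiE_mem[OF u', of i] i by (auto simp: path_box_def)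
    moreover have "set (P i) \<subseteq> UNIV \<times> {1..r}" and "set (P' i) \<subseteq> UNIV \<times> {1..r}"
      using path_familiesD(2)[OF P i] path_familiesD(2)[OF P' i] by auto
    ultimately have "{x. (x, Suc r) \<in> set (P i @ row_segment (u i) (w i) (Suc r))} = {u i..w i}"
      and "{x. (x, Suc r) \<in> set (P' i @ row_segment (u' i) (w i) (Suc r))} = {u' i..w i}"
      by auto
    hence "{u i..w i} = {u' i..w i}"
      using Q by simp
    hence "u i = u' i"
      using \<open>u i \<le> w i\<close> \<open>u' i \<le> w i\<close> by (simp add: Icc_eq_Icc)
    thus ?thesis
      using Q by simp
  qed
  have "u = u'"
  proof
    fix i show "u i = u' i"
      using same[of i] PiE_arb[OF u, of i] PiE_arb[OF u', of i] by (cases "i < N") auto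
  qed
  moreover have "P = P'"
  proof
    fix i show "P i = P' i"
      using same[of i] path_familiesD(5)[OF P, of i] path_familiesD(5)[OF P', of i] by (cases "i < N") auto
  qed
  ultimately show "u = u' \<and> P = P'" ..
qed

lemma split_last_row:
  assumes q: "up_right_path q" and q_sub: "set q \<subseteq> {1..L} \<times> {1..Suc r}"
    and "hd q = (s, 1)" and "last q = (b, Suc r)" and "1 \<le> r"
  obtains p a where "q = p @ row_segment a b (Suc r)" and "a \<le> b" and "up_right_path p"
    and "set p \<subseteq> {1..L} \<times> {1..r}" and "hd p = (s, 1)" and "last p = (a, r)"
proof -
  have q': "successively unit_step q" "q \<noteq> []"
    using q by (auto simp: up_right_path_iff)
  moreover have "\<forall>z\<in>set q. snd z \<le> Suc r"
    using q_sub by auto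
  ultimately obtain p a where p: "q = p @ row_segment a b (Suc r)" "a \<le> b"
    "\<forall>z\<in>set p. snd z < Suc r" "successively unit_step (p @ [(a, Suc r)])"
    using split_top_row[of q "Suc r"] \<open>last q = (b, Suc r)\<close> by auto
  have "p \<noteq> []"
  proof
    assume "p = []"
    hence "hd q = (a, Suc r)" using p(1,2) row_segment_simps(2)[OF p(2)] by simp
    thus False using \<open>hd q = (s, 1)\<close> \<open>1 \<le> r\<close> by simp
  qed
  hence "unit_step (last p) (a, Suc r)" and "successively unit_step p"
    using p(4) by (auto simp: successively_append_iff)
  hence "last p = (a, r)"
    using p(3) last_in_set[OF \<open>p \<noteq> []\<close>] by (cases "last p") (auto simp: unit_step_def)
  moreover have "set p \<subseteq> {1..L} \<times> {1..r}"
    using p(1,3) q_sub by fastforce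
  moreover have "hd p = (s, 1)"
    using p(1) \<open>p \<noteq> []\<close> \<open>hd q = (s, 1)\<close> by simp
  ultimately show ?thesis
    using that p(1,2) \<open>p \<noteq> []\<close> \<open>successively unit_step p\<close> by (simp add: up_right_path_iff)
qed

lemma last_row_start_in_path_box:
  assumes w: "positions N w" and Q: "Q \<in> path_families L N (Suc r) w" and i: "i < N"
    and Q_i: "Q i = p @ row_segment a (w i) (Suc r)" and "a \<le> w i" and "p \<noteq> []"
    and "last p = (a, r)" and "set p \<subseteq> {1..L} \<times> {1..r}"
  shows "a \<in> path_box w i"
proof -
  have "(a, r) \<in> set p"
    using last_in_set[OF \<open>p \<noteq> []\<close>] \<open>last p = (a, r)\<close> by simp
  hence "0 < a"
    using \<open>set p \<subseteq> {1..L} \<times> {1..r}\<close> by auto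
  moreover have "\<not> a \<le> w (i - 1)" if "0 < i"
  proof
    assume "a \<le> w (i - 1)"
    moreover have "i - 1 < N" and "i - 1 \<noteq> i"
      using i that by auto
    moreover have "w (i - 1) < w i"
      using positions_less[OF w _ i, of "i - 1"] that by simp
    ultimately have "(w (i - 1), Suc r) \<in> set (Q i)" and "(w (i - 1), Suc r) \<in> set (Q (i - 1))"
      using Q_i path_familiesD(1,4)[OF Q \<open>i - 1 < N\<close>] last_in_set[of "Q (i - 1)"]
      by (auto simp: up_right_path_iff)
    thus False
      using path_familiesD(6)[OF Q \<open>i - 1 < N\<close> i \<open>i - 1 \<noteq> i\<close>] by auto
  qed
  ultimately show ?thesis
    using \<open>a \<le> w i\<close> by (auto simp: path_box_def prev_pos_def)
qed

lemma split_last_row_family: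
  assumes Q: "Q \<in> path_families L N (Suc r) w" and "1 \<le> r"
  obtains p a where "\<And>i. i < N \<Longrightarrow> Q i = p i @ row_segment (a i) (w i) (Suc r) \<and> a i \<le> w i
      \<and> up_right_path (p i) \<and> set (p i) \<subseteq> {1..L} \<times> {1..r} \<and> hd (p i) = (Suc i, 1)
      \<and> last (p i) = (a i, r)"
proof -
  have "\<forall>i\<in>{0..<N}. \<exists>pa. Q i = fst pa @ row_segment (snd pa) (w i) (Suc r) \<and> snd pa \<le> w i
      \<and> up_right_path (fst pa) \<and> set (fst pa) \<subseteq> {1..L} \<times> {1..r} \<and> hd (fst pa) = (Suc i, 1)
      \<and> last (fst pa) = (snd pa, r)"
  proof
    fix i assume "i \<in> {0..<N}"
    hence i: "i < N" by simp
    obtain p a where "Q i = p @ row_segment a (w i) (Suc r)" "a \<le> w i" "up_right_path p"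
      "set p \<subseteq> {1..L} \<times> {1..r}" "hd p = (Suc i, 1)" "last p = (a, r)"
      using split_last_row[OF path_familiesD(1,2,3,4)[OF Q i] \<open>1 \<le> r\<close>] .
    thus "\<exists>pa. Q i = fst pa @ row_segment (snd pa) (w i) (Suc r) \<and> snd pa \<le> w i
      \<and> up_right_path (fst pa) \<and> set (fst pa) \<subseteq> {1..L} \<times> {1..r} \<and> hd (fst pa) = (Suc i, 1)
      \<and> last (fst pa) = (snd pa, r)"
      by (intro exI[of _ "(p, a)"]) simp
  qed
  then obtain f where f: "\<forall>i\<in>{0..<N}. Q i = fst (f i) @ row_segment (snd (f i)) (w i) (Suc r)
      \<and> snd (f i) \<le> w i \<and> up_right_path (fst (f i)) \<and> set (fst (f i)) \<subseteq> {1..L} \<times> {1..r}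
      \<and> hd (fst (f i)) = (Suc i, 1) \<and> last (fst (f i)) = (snd (f i), r)"
    by (rule bchoice[elim_format]) blast
  show ?thesis
    by (rule that[of "\<lambda>i. fst (f i)" "\<lambda>i. snd (f i)"]) (use bspec[OF f] in simp)
qed

lemma path_family_decompose:
  assumes w: "positions N w" and Q: "Q \<in> path_families L N (Suc r) w" and "1 \<le> r"
  obtains u P where "u \<in> PiE {0..<N} (path_box w)" and "P \<in> path_families L N r u"
    and "Q = extend_family N r w u P"
proof -
  obtain p a where parts: "\<And>i. i < N \<Longrightarrow> Q i = p i @ row_segment (a i) (w i) (Suc r) \<and> a i \<le> w i
      \<and> up_right_path (p i) \<and> set (p i) \<subseteq> {1..L} \<times> {1..r} \<and> hd (p i) = (Suc i, 1)
      \<and> last (p i) = (a i, r)"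
    using split_last_row_family[OF Q \<open>1 \<le> r\<close>] by blast
  define u where "u = restrict a {0..<N}"
  define P where "P i = (if i < N then p i else [])" for i
  have "u \<in> PiE {0..<N} (path_box w)"
  proof (rule PiE_I)
    fix i assume "i \<in> {0..<N}"
    hence i: "i < N" by simp
    thus "u i \<in> path_box w i"
      using parts[OF i] last_row_start_in_path_box[OF w Q i] by (auto simp: up_right_path_iff u_def)
  qed (simp add: u_def)
  moreover have "P \<in> path_families L N r u"
    unfolding path_families_def
  proof (intro CollectI conjI allI impI)
    fix i k assume "i < N" "k < N" "i \<noteq> k"
    thus "set (P i) \<inter> set (P k) = {}"
      using parts path_familiesD(6)[OF Q] by (fastforce simp: P_def)
  qed (use parts in \<open>auto simp: P_def u_def\<close>)
  moreover have "Q = extend_family N r w u P"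
  proof
    fix i show "Q i = extend_family N r w u P i"
      using parts[of i] path_familiesD(5)[OF Q, of i]
      by (cases "i < N") (auto simp: extend_family_def P_def u_def)
  qed
  ultimately show ?thesis using that by blast
qed

lemma path_families_Suc:
  assumes w: "positions N w" and w_le: "\<And>i. i < N \<Longrightarrow> w i \<le> L" and "1 \<le> r"
  shows "path_families L N (Suc r) w
       = (\<lambda>(u, P). extend_family N r w u P) ` Sigma (PiE {0..<N} (path_box w)) (path_families L N r)"
proof (intro equalityI subsetI)
  fix Q assume "Q \<in> path_families L N (Suc r) w"
  then obtain u P where "u \<in> PiE {0..<N} (path_box w)" "P \<in> path_families L N r u"
    and "Q = extend_family N r w u P"
    using path_family_decompose[OF w _ \<open>1 \<le> r\<close>] by blast
  thus "Q \<in> (\<lambda>(u, P). extend_family N r w u P) ` Sigma (PiE {0..<N} (path_box w)) (path_families L N r)"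
    by (intro image_eqI[of _ _ "(u, P)"]) simp_all
qed (use extend_family_mem[OF w w_le] in auto)

lemma sum_PiE_point_indicator:
  fixes N :: nat
  assumes "\<And>i. i < N \<Longrightarrow> finite (A i)"
  shows "(\<Sum>u\<in>PiE {0..<N} A. if \<forall>i<N. u i = c i then 1 else 0 :: nat) = (if \<forall>i<N. c i \<in> A i then 1 else 0)"
proof -
  have "{u \<in> PiE {0..<N} A. \<forall>i<N. u i = c i} = (if \<forall>i<N. c i \<in> A i then {restrict c {0..<N}} else {})"
  proof (cases "\<forall>i<N. c i \<in> A i")
    case True
    have "u = restrict c {0..<N}" if "u \<in> PiE {0..<N} A" "\<forall>i<N. u i = c i" for u
      using that PiE_arb[OF that(1)] by (auto simp: fun_eq_iff)
    moreover have "restrict c {0..<N} \<in> PiE {0..<N} A"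
      using True by simp
    ultimately show ?thesis
      using True by auto
  next
    case False
    then obtain i where "i < N" "c i \<notin> A i" by auto
    hence "u \<notin> PiE {0..<N} A" if "\<forall>i<N. u i = c i" for u
      using that PiE_mem[of u "{0..<N}" A i] by auto
    thus ?thesis
      using False by auto
  qed
  moreover have "finite (PiE {0..<N} A)"
    using assms by (intro finite_PiE) auto
  ultimately show ?thesis
    by (simp flip: sum.inter_filter)
qed

lemma card_path_families:
  assumes "1 \<le> r" and "positions N w" and "\<And>i. i < N \<Longrightarrow> w i \<le> L"
  shows "finite (path_families L N r w) \<and> card (path_families L N r w) = box_walks path_box N r w"
  using assms
proof (induction r arbitrary: w rule: nat_induct_at_least)
  case base
  have "box_walks path_box N 1 w = (if \<forall>i<N. Suc i \<in> path_box w i then 1 else 0)"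
    by (simp add: sum_PiE_point_indicator path_box_def)
  moreover have "path_families L N 1 w = (if \<forall>i<N. Suc i \<in> path_box w i then {first_row_family N w} else {})"
    by (rule path_families_1[OF base])
  ultimately show ?case
    by simp
next
  case (Suc r)
  note w = Suc.prems(1) and w_le = Suc.prems(2)
  have IH: "finite (path_families L N r u) \<and> card (path_families L N r u) = box_walks path_box N r u"
    if u: "u \<in> PiE {0..<N} (path_box w)" for u
  proof (rule Suc.IH)
    show "positions N u"
      by (rule box_positions[OF w u path_box_subset])
    fix i assume "i < N"
    thus "u i \<le> L"
      using PiE_mem[OF u, of i] w_le[of i] by (auto simp: path_box_def)
  qed
  have box_finite: "finite (PiE {0..<N} (path_box w))"
    by (simp add: finite_PiE path_box_def)
  have families: "path_families L N (Suc r) w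
      = (\<lambda>(u, P). extend_family N r w u P) ` Sigma (PiE {0..<N} (path_box w)) (path_families L N r)"
    by (rule path_families_Suc[OF w w_le Suc.hyps])
  have "card (path_families L N (Suc r) w) = card (Sigma (PiE {0..<N} (path_box w)) (path_families L N r))"
    unfolding families by (rule card_image[OF extend_family_inj])
  also have "\<dots> = (\<Sum>u\<in>PiE {0..<N} (path_box w). card (path_families L N r u))"
    using IH box_finite by (simp add: card_SigmaI)
  also have "\<dots> = box_walks path_box N (Suc r) w"
    using IH by simp
  finally show ?case
    using families box_finite IH by simp
qed

lemma det_zbinom_eq_of_int_det_ibinom:
  assumes "\<And>i j. i < N \<Longrightarrow> j < N \<Longrightarrow> 0 \<le> a i j"
  shows "det (mat N N (\<lambda>(i, j). zbinom (a i j) (b i j)))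
       = of_int (det (mat N N (\<lambda>(i, j). ibinom (a i j) (b i j))))"
proof -
  have "mat N N (\<lambda>(i, j). zbinom (a i j) (b i j)) = map_mat of_int (mat N N (\<lambda>(i, j). ibinom (a i j) (b i j)))"
    using assms by (intro eq_matI) (auto simp: zbinom_eq_ibinom)
  thus ?thesis
    by (simp add: of_int_hom.hom_det)
qed

lemma positions_last_columns: "positions N (\<lambda>i. L - N + Suc i)"
  by (simp add: positions_def strict_mono_on_def)

lemma image_last_columns:
  assumes "N \<le> L"
  shows "(\<lambda>i. L - N + Suc i) ` {0..<N} = {L - N + 1..L}"
proof (intro equalityI subsetI)
  fix x assume "x \<in> {L - N + 1..L}"
  thus "x \<in> (\<lambda>i. L - N + Suc i) ` {0..<N}"
    using assms by (intro image_eqI[of _ _ "x - (L - N + 1)"]) auto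
qed (use assms in auto)

lemma last_columns_le: "N \<le> L \<Longrightarrow> i < N \<Longrightarrow> L - N + Suc i \<le> L"
  by simp

lemma Z_det:
  assumes "N \<le> L"
  shows "of_nat (Z L M N)
       = det (mat N N (\<lambda>(i, j). zbinom (int M + int i - int j) (int L - int N + int i - int j)))"
proof -
  have "Z L M N = card (vertical_histories L N M ((\<lambda>i. L - N + Suc i) ` {0..<N}))"
    unfolding image_last_columns[OF assms] by (rule Z_eq_card_vertical_histories[OF assms])
  also have "\<dots> = box_walks vertex_box N M (\<lambda>i. L - N + Suc i)"
    using card_vertical_histories[OF assms positions_last_columns last_columns_le[OF assms]] .
  also have "of_nat \<dots> = det (mat N N (\<lambda>(i, j). zbinom (int M + int i - int j) (int (L - N + Suc i) - int j - 1)))"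
    by (rule box_walks_vertex_box[OF positions_last_columns])
  also have "\<dots> = det (mat N N (\<lambda>(i, j). zbinom (int M + int i - int j) (int L - int N + int i - int j)))"
    using assms by (intro arg_cong[where f = det] eq_matI) (auto simp: of_nat_diff algebra_simps)
  finally show ?thesis .
qed

lemma card_path_tuples_det:
  assumes "N \<le> L" and "L \<le> M" and "K = M - L + N + 1"
  shows "of_nat (card (path_tuples L K N))
       = det (mat N N (\<lambda>(i, j). zbinom (int M + int i - int j) (int L - int N + int i - int j)))"
proof -
  have "card (path_tuples L K N) = card (path_families L N K (\<lambda>i. L - N + Suc i))"
    by (rule card_path_tuples)
  also have "\<dots> = box_walks path_box N K (\<lambda>i. L - N + Suc i)"
    using card_path_families[OF _ positions_last_columns last_columns_le[OF assms(1)]] assms(3) by simp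
  also have "of_nat \<dots> = det (mat N N (\<lambda>(i, j). zbinom (int (L - N + Suc i) + int K - int j - 2) (int (L - N + Suc i) - int j - 1)))"
    by (rule box_walks_path_box[OF positions_last_columns])
  also have "\<dots> = det (mat N N (\<lambda>(i, j). zbinom (int M + int i - int j) (int L - int N + int i - int j)))"
    using assms by (intro arg_cong[where f = det] eq_matI) (auto simp: of_nat_diff algebra_simps)
  finally show ?thesis .
qed

theorem mainTheorem3:
  fixes L M N K :: nat
  assumes "M \<ge> L" and "L > N" and "N \<ge> 1" and "K = M - L + N + 1"
  shows "Z L M N = card (path_tuples L K N) \<and>
         int (Z L M N) =
           det (mat N N (\<lambda>(i, j). ibinom (int M + int i - int j) (int L - int N + int i - int j)))"
proof -
  define B where "B = mat N N (\<lambda>(i, j). zbinom (int M + int i - int j) (int L - int N + int i - int j))"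
  have "N \<le> L" using assms(2) by simp
  have Z: "of_nat (Z L M N) = det B"
    unfolding B_def by (rule Z_det[OF \<open>N \<le> L\<close>])
  have paths: "of_nat (card (path_tuples L K N)) = det B"
    unfolding B_def by (rule card_path_tuples_det[OF \<open>N \<le> L\<close> assms(1,4)])
  have "det B = of_int (det (mat N N (\<lambda>(i, j). ibinom (int M + int i - int j) (int L - int N + int i - int j))))"
    unfolding B_def using assms(1,2) by (intro det_zbinom_eq_of_int_det_ibinom) auto
  hence "(of_int (int (Z L M N)) :: rat)
      = of_int (det (mat N N (\<lambda>(i, j). ibinom (int M + int i - int j) (int L - int N + int i - int j))))"
    using Z by simp
  moreover have "(of_nat (Z L M N) :: rat) = of_nat (card (path_tuples L K N))"
    using Z paths by simp
  ultimately show ?thesis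
    by (simp only: of_int_eq_iff of_nat_eq_iff)
qed

end
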